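(* The set $\{\operatorname{is}(X): X\in\mathfrak U\}$ is dense in the space of isometry types of compact ultrametric spaces endowed with the Gromov–Hausdorff metric $d_{GH}$.
   Context: $\operatorname{Sp}(X)=\{d(x,y):x\neq y\}$; $\mathfrak U$ is the class of finite ultrametric spaces $X$ with $|\operatorname{Sp}(X)|=|X|-1$. $\operatorname{is}(X)$ denotes the isometry type (class of all metric spaces isometric to $X$). For bounded metric spaces $X,Y$ and $\varepsilon>0$, $d_{GH}(\operatorname{is}(X),\operatorname{is}(Y))<\varepsilon$ iff there is a metric space $(Z,d_Z)$ with subspaces $X',Y'$ isometric to $X,Y$ such that $X'\subseteq\bigcup_{y\in Y'}O_\varepsilon(y)$ and $Y'\subseteq\bigcup_{x\in X'}O_\varepsilon(x)$, where $O_\varepsilon(t)=\{z\in Z:d_Z(t,z)<\varepsilon\}$; $d_{GH}$ is a metric on isometry types of compact metric spaces. *)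

theory Defs
  imports "HOL-Analysis.Analysis"
begin

definition ultrametric_space :: "'a set \<Rightarrow> ('a \<Rightarrow> 'a \<Rightarrow> real) \<Rightarrow> bool" where
  "ultrametric_space M d \<longleftrightarrow> Metric_space M d \<and>
     (\<forall>x\<in>M. \<forall>y\<in>M. \<forall>z\<in>M. d x z \<le> max (d x y) (d y z))"

definition Sp :: "'a set \<Rightarrow> ('a \<Rightarrow> 'a \<Rightarrow> real) \<Rightarrow> real set" where
  "Sp M d = {d x y | x y. x \<in> M \<and> y \<in> M \<and> x \<noteq> y}"

definition in_U :: "'a set \<Rightarrow> ('a \<Rightarrow> 'a \<Rightarrow> real) \<Rightarrow> bool" where
  "in_U M d \<longleftrightarrow> ultrametric_space M d \<and> finite M \<and> M \<noteq> {} \<and> card (Sp M d) + 1 = card M"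

definition isometric_spaces ::
  "'a set \<Rightarrow> ('a \<Rightarrow> 'a \<Rightarrow> real) \<Rightarrow> 'b set \<Rightarrow> ('b \<Rightarrow> 'b \<Rightarrow> real) \<Rightarrow> bool" where
  "isometric_spaces M d M' d' \<longleftrightarrow>
     (\<exists>f. bij_betw f M M' \<and> (\<forall>x\<in>M. \<forall>y\<in>M. d' (f x) (f y) = d x y))"

text \<open>d_GH(is X, is Y) < eps, via the characterization in the paper; the ambient
  space Z is taken on the type 'a + 'b (big enough to contain any X' \<union> Y').\<close>
definition GH_less ::
  "'a set \<Rightarrow> ('a \<Rightarrow> 'a \<Rightarrow> real) \<Rightarrow> 'b set \<Rightarrow> ('b \<Rightarrow> 'b \<Rightarrow> real) \<Rightarrow> real \<Rightarrow> bool" where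
  "GH_less X dX Y dY eps \<longleftrightarrow>
     (\<exists>(Z :: ('a + 'b) set) dZ X' Y'. Metric_space Z dZ \<and> X' \<subseteq> Z \<and> Y' \<subseteq> Z \<and>
        isometric_spaces X dX X' dZ \<and> isometric_spaces Y dY Y' dZ \<and>
        (\<forall>x\<in>X'. \<exists>y\<in>Y'. dZ y x < eps) \<and> (\<forall>y\<in>Y'. \<exists>x\<in>X'. dZ x y < eps))"

end

theory Submission
  imports Defs
begin

text \<open>
  A compact ultrametric space Y is within eps/2 of a finite subspace K (an eps/2-net).
  Adding the points of K one at a time, each new point x can be re-attached to its
  nearest earlier point q at a distance taken from [d x q, d x q + eps/2] that is not yet
  a distance of the space; by the ultrametric inequality this defines an ultrametric whose
  distance set grows by exactly one value. The result lies in the class U and moves every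
  distance by at most eps/2, and gluing it to Y along K with an extra eps/2 between the
  two copies witnesses a Gromov-Hausdorff distance below eps.
\<close>

lemma ultrametric_imp_Metric_space: "ultrametric_space M d \<Longrightarrow> Metric_space M d"
  unfolding ultrametric_space_def by blast

lemma ultrametric_triangle:
  "\<lbrakk>ultrametric_space M d; x \<in> M; y \<in> M; z \<in> M\<rbrakk> \<Longrightarrow> d x z \<le> max (d x y) (d y z)"
  unfolding ultrametric_space_def by blast

lemma ultrametric_spaceI:
  assumes "\<And>x y. 0 \<le> d x y" "\<And>x y. d x y = d y x"
    and "\<And>x y. \<lbrakk>x \<in> M; y \<in> M\<rbrakk> \<Longrightarrow> d x y = 0 \<longleftrightarrow> x = y"
    and "\<And>x y z. \<lbrakk>x \<in> M; y \<in> M; z \<in> M\<rbrakk> \<Longrightarrow> d x z \<le> max (d x y) (d y z)"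
  shows "ultrametric_space M d"
proof -
  have "Metric_space M d"
  proof
    fix x y z assume "x \<in> M" "y \<in> M" "z \<in> M"
    then show "d x z \<le> d x y + d y z"
      using assms(4)[of x y z] assms(1)[of x y] assms(1)[of y z] by linarith
  qed (use assms in auto)
  with assms(4) show ?thesis unfolding ultrametric_space_def by blast
qed

lemma ultrametric_space_subset:
  "\<lbrakk>ultrametric_space M d; N \<subseteq> M\<rbrakk> \<Longrightarrow> ultrametric_space N d"
  unfolding ultrametric_space_def using Metric_space.subspace by blast

lemma finite_Sp: "finite M \<Longrightarrow> finite (Sp M d)"
proof -
  assume "finite M"
  moreover have "Sp M d \<subseteq> (\<lambda>(x, y). d x y) ` (M \<times> M)" unfolding Sp_def by force
  ultimately show ?thesis using finite_subset by blast
qed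

lemma ultrametric_dist_eq_max_if_nearest:
  assumes "ultrametric_space M d" "x \<in> M" "q \<in> M" "c \<in> M" "d x q \<le> d x c"
  shows "d c x = max (d c q) (d x q)"
proof -
  interpret Metric_space M d using assms(1) by (rule ultrametric_imp_Metric_space)
  have "d c x \<le> max (d c q) (d q x)" "d c q \<le> max (d c x) (d x q)"
    using assms by (auto intro: ultrametric_triangle)
  then show ?thesis using assms(5) commute[of x c] commute[of x q] by linarith
qed

definition point_extension ::
  "'a \<Rightarrow> ('a \<Rightarrow> real) \<Rightarrow> ('a \<Rightarrow> 'a \<Rightarrow> real) \<Rightarrow> 'a \<Rightarrow> 'a \<Rightarrow> real" where
  "point_extension x D d a b =
     (if a = x then (if b = x then 0 else D b) else if b = x then D a else d a b)"

lemma ultrametric_point_extension: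
  assumes "ultrametric_space F d" "x \<notin> F" "\<And>a. 0 < D a"
    and "\<And>a b. \<lbrakk>a \<in> F; b \<in> F\<rbrakk> \<Longrightarrow> D a \<le> max (d a b) (D b)"
    and "\<And>a c. \<lbrakk>a \<in> F; c \<in> F\<rbrakk> \<Longrightarrow> d a c \<le> max (D a) (D c)"
  shows "ultrametric_space (insert x F) (point_extension x D d)"
proof -
  interpret Metric_space F d using assms(1) by (rule ultrametric_imp_Metric_space)
  have "0 \<le> D a" "D a \<noteq> 0" for a using assms(3)[of a] by linarith+
  moreover have "D b \<le> max (D a) (d a b)" if "a \<in> F" "b \<in> F" for a b
    using assms(4)[OF that(2,1)] commute[of a b] by linarith
  ultimately show ?thesis
    using assms ultrametric_triangle[OF assms(1)]
    by (intro ultrametric_spaceI) (auto simp: point_extension_def commute max.commute)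
qed

lemma Sp_point_extension:
  assumes "x \<notin> F"
  shows "Sp (insert x F) (point_extension x D d) = Sp F d \<union> D ` F"
proof (intro equalityI subsetI)
  fix t assume "t \<in> Sp (insert x F) (point_extension x D d)"
  then obtain a b where "t = point_extension x D d a b" "a \<in> insert x F" "b \<in> insert x F" "a \<noteq> b"
    unfolding Sp_def by blast
  then show "t \<in> Sp F d \<union> D ` F"
    unfolding Sp_def point_extension_def by (auto split: if_splits)
next
  fix t assume "t \<in> Sp F d \<union> D ` F"
  then consider a b where "t = d a b" "a \<in> F" "b \<in> F" "a \<noteq> b" | a where "t = D a" "a \<in> F"
    unfolding Sp_def by blast
  then show "t \<in> Sp (insert x F) (point_extension x D d)"
  proof cases
    case 1
    then show ?thesis using assms unfolding Sp_def point_extension_def by force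
  next
    case 2
    then have "t = point_extension x D d x a" "a \<noteq> x"
      using assms unfolding point_extension_def by auto
    then show ?thesis using \<open>a \<in> F\<close> unfolding Sp_def by blast
  qed
qed

lemma ultrametric_attach_point:
  assumes "ultrametric_space F d" "x \<notin> F" "q \<in> F" "0 < t"
  shows "ultrametric_space (insert x F) (point_extension x (\<lambda>a. max (d a q) t) d)"
proof (rule ultrametric_point_extension[OF assms(1,2)])
  interpret Metric_space F d using assms(1) by (rule ultrametric_imp_Metric_space)
  show "0 < max (d a q) t" for a using \<open>0 < t\<close> by linarith
  show "max (d a q) t \<le> max (d a b) (max (d b q) t)" if "a \<in> F" "b \<in> F" for a b
    using ultrametric_triangle[OF assms(1) that assms(3)] by linarith
  show "d a c \<le> max (max (d a q) t) (max (d c q) t)" if "a \<in> F" "c \<in> F" for a c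
    using ultrametric_triangle[OF assms(1) that(1) assms(3) that(2)] commute[of q c] by linarith
qed

lemma Sp_attach_point:
  assumes "Metric_space F d" "x \<notin> F" "q \<in> F" "0 \<le> t"
  shows "Sp (insert x F) (point_extension x (\<lambda>a. max (d a q) t) d) = insert t (Sp F d)"
proof -
  interpret Metric_space F d by (rule assms(1))
  have "max (d a q) t \<in> insert t (Sp F d)" if "a \<in> F" for a
  proof (cases "a = q")
    case False
    then have "d a q \<in> Sp F d" unfolding Sp_def using that assms(3) by blast
    then show ?thesis by (simp add: max_def)
  qed (use assms(3,4) in simp)
  moreover have "t \<in> (\<lambda>a. max (d a q) t) ` F"
    using assms(3,4) by (intro rev_image_eqI[of q]) simp_all
  ultimately show ?thesis unfolding Sp_point_extension[OF assms(2)] by blast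
qed

lemma ultrametric_perturbation_in_U:
  assumes "finite S" "S \<noteq> {}" "ultrametric_space S d" "\<delta> > 0"
  shows "\<exists>d'. ultrametric_space S d' \<and> card (Sp S d') + 1 = card S \<and>
     (\<forall>a\<in>S. \<forall>b\<in>S. d a b \<le> d' a b \<and> d' a b \<le> d a b + \<delta>)"
  using assms(1,2,3)
proof (induction S rule: finite_ne_induct)
  case (singleton x)
  have "ultrametric_space {x} (\<lambda>_ _. 0)" by (rule ultrametric_spaceI) auto
  moreover have "Sp {x} (\<lambda>_ _. 0) = {}" unfolding Sp_def by auto
  moreover have "d x x = 0"
    using Metric_space.zero[OF ultrametric_imp_Metric_space[OF singleton]] by simp
  ultimately show ?case using \<open>\<delta> > 0\<close> by (intro exI[of _ "\<lambda>_ _. 0"]) simp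
next
  case (insert x F)
  interpret Metric_space "insert x F" d using insert.prems by (rule ultrametric_imp_Metric_space)
  obtain d' where d': "ultrametric_space F d'" "card (Sp F d') + 1 = card F"
    "\<And>a b. \<lbrakk>a \<in> F; b \<in> F\<rbrakk> \<Longrightarrow> d a b \<le> d' a b \<and> d' a b \<le> d a b + \<delta>"
    using insert.IH ultrametric_space_subset[OF insert.prems] by blast
  obtain q where q: "q \<in> F" "\<And>c. c \<in> F \<Longrightarrow> d x q \<le> d x c"
    using ex_is_arg_min_if_finite[OF insert.hyps(1,2), of "d x"] unfolding is_arg_min_def
    by (metis not_le)
  have "d x q > 0" using q(1) insert.hyps(3) nonneg[of x q] zero[of x q] by fastforce
  \<comment> \<open>The new distance m' must not occur in F yet, so that Sp grows by one.\<close>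
  have "\<not> {d x q..d x q + \<delta>} \<subseteq> Sp F d'"
    using infinite_Icc[of "d x q" "d x q + \<delta>"] finite_Sp[OF insert.hyps(1)] \<open>\<delta> > 0\<close>
    by (meson finite_subset less_add_same_cancel1)
  then obtain m' where m': "d x q \<le> m'" "m' \<le> d x q + \<delta>" "m' \<notin> Sp F d'"
    by (meson atLeastAtMost_iff subsetI)
  have "0 < m'" using \<open>d x q > 0\<close> m'(1) by linarith
  define D where "D a = max (d' a q) m'" for a
  have "ultrametric_space (insert x F) (point_extension x D d')"
    unfolding D_def using d'(1) insert.hyps(3) q(1) \<open>0 < m'\<close> by (rule ultrametric_attach_point)
  moreover have "Sp (insert x F) (point_extension x D d') = insert m' (Sp F d')"
    unfolding D_def
    using ultrametric_imp_Metric_space[OF d'(1)] insert.hyps(3) q(1) less_imp_le[OF \<open>0 < m'\<close>]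
    by (rule Sp_attach_point)
  moreover have "card (insert m' (Sp F d')) + 1 = card (insert x F)"
    using insert.hyps(1,3) d'(2) m'(3) finite_Sp[OF insert.hyps(1)] by simp
  moreover have "d a b \<le> point_extension x D d' a b \<and> point_extension x D d' a b \<le> d a b + \<delta>"
    if "a \<in> insert x F" "b \<in> insert x F" for a b
  proof -
    have "d c x \<le> D c \<and> D c \<le> d c x + \<delta>" if "c \<in> F" for c
      using ultrametric_dist_eq_max_if_nearest[OF insert.prems, of x q c] q that d'(3)[OF that q(1)]
        m'(1,2) unfolding D_def by auto
    then show ?thesis
      using that d'(3) commute[of x a] commute[of x b] \<open>\<delta> > 0\<close>
      unfolding point_extension_def by auto
  qed
  ultimately show ?case by (intro exI[of _ "point_extension x D d'"]) auto
qed

lemma ultrametric_space_pullback: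
  assumes "inj_on h X" "ultrametric_space (h ` X) d"
  shows "ultrametric_space X (\<lambda>i j. d (h i) (h j))"
proof -
  interpret Metric_space "h ` X" d using assms(2) by (rule ultrametric_imp_Metric_space)
  show ?thesis
    using assms commute ultrametric_triangle[OF assms(2)]
    by (intro ultrametric_spaceI) (auto simp: inj_on_eq_iff)
qed

lemma Sp_pullback: "inj_on h X \<Longrightarrow> Sp X (\<lambda>i j. d (h i) (h j)) = Sp (h ` X) d"
  unfolding Sp_def by (auto simp: inj_on_eq_iff) (metis imageI inj_on_eq_iff)

lemma in_U_pullback: "\<lbrakk>inj_on h X; in_U (h ` X) d\<rbrakk> \<Longrightarrow> in_U X (\<lambda>i j. d (h i) (h j))"
  unfolding in_U_def
  by (simp add: ultrametric_space_pullback Sp_pullback card_image finite_image_iff)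

definition glue_dist ::
  "('a \<Rightarrow> 'a \<Rightarrow> real) \<Rightarrow> ('b \<Rightarrow> 'b \<Rightarrow> real) \<Rightarrow> ('a \<Rightarrow> 'b) \<Rightarrow> real \<Rightarrow> 'a + 'b \<Rightarrow> 'a + 'b \<Rightarrow> real"
  where
  "glue_dist dX dY f r u v = (case (u, v) of
      (Inl i, Inl j) \<Rightarrow> dX i j
    | (Inl i, Inr y) \<Rightarrow> dY (f i) y + r
    | (Inr y, Inl j) \<Rightarrow> dY y (f j) + r
    | (Inr y, Inr y') \<Rightarrow> dY y y')"

lemma Metric_space_glue_dist:
  assumes "Metric_space X dX" "Metric_space Y dY" "f ` X \<subseteq> Y" "0 < r"
    and "\<And>i j. \<lbrakk>i \<in> X; j \<in> X\<rbrakk> \<Longrightarrow> dY (f i) (f j) \<le> dX i j \<and> dX i j \<le> dY (f i) (f j) + 2 * r"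
  shows "Metric_space (Inl ` X \<union> Inr ` Y) (glue_dist dX dY f r)"
proof -
  interpret X: Metric_space X dX by (rule assms(1))
  interpret Y: Metric_space Y dY by (rule assms(2))
  define p where "p = case_sum f id"
  define lvl :: "'a + 'b \<Rightarrow> real" where "lvl = case_sum (\<lambda>_. r) (\<lambda>_. 0)"
  let ?Z = "Inl ` X \<union> Inr ` Y"
  have p: "p u \<in> Y" if "u \<in> ?Z" for u using that assms(3) unfolding p_def by auto
  \<comment> \<open>Away from X \<times> X the glued distance is the distance of the projections to Y plus the
    levels; on X \<times> X it is only pinched between these bounds.\<close>
  have upper: "glue_dist dX dY f r u v \<le> dY (p u) (p v) + lvl u + lvl v" if "u \<in> ?Z" "v \<in> ?Z" for u v
    using that assms(5) unfolding glue_dist_def p_def lvl_def by (force simp: add.commute)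
  have lower: "dY (p u) (p v) + \<bar>lvl u - lvl v\<bar> \<le> glue_dist dX dY f r u v" if "u \<in> ?Z" "v \<in> ?Z" for u v
    using that assms(5) less_imp_le[OF \<open>0 < r\<close>] unfolding glue_dist_def p_def lvl_def by auto
  show ?thesis
  proof
    fix u v
    show "0 \<le> glue_dist dX dY f r u v" "glue_dist dX dY f r u v = glue_dist dX dY f r v u"
      using \<open>0 < r\<close> X.commute Y.commute unfolding glue_dist_def
      by (auto split: sum.split)
  next
    fix u v assume "u \<in> ?Z" "v \<in> ?Z"
    show "glue_dist dX dY f r u v = 0 \<longleftrightarrow> u = v"
    proof -
      have "dY a b + r \<noteq> 0" for a b using Y.nonneg[of a b] \<open>0 < r\<close> by linarith
      then show ?thesis using \<open>u \<in> ?Z\<close> \<open>v \<in> ?Z\<close> unfolding glue_dist_def by (cases u; cases v) auto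
    qed
  next
    fix u v w assume uvw: "u \<in> ?Z" "v \<in> ?Z" "w \<in> ?Z"
    show "glue_dist dX dY f r u w \<le> glue_dist dX dY f r u v + glue_dist dX dY f r v w"
    proof (cases "\<exists>i j k. u = Inl i \<and> v = Inl j \<and> w = Inl k")
      case True
      then show ?thesis using uvw X.triangle unfolding glue_dist_def by auto
    next
      case False
      then have "lvl u + lvl w \<le> \<bar>lvl u - lvl v\<bar> + \<bar>lvl v - lvl w\<bar>"
        using \<open>0 < r\<close> unfolding lvl_def by (cases u; cases v; cases w) auto
      then show ?thesis
        using upper[OF uvw(1,3)] lower[OF uvw(1,2)] lower[OF uvw(2,3)]
          Y.triangle[OF p[OF uvw(1)] p[OF uvw(2)] p[OF uvw(3)]] by linarith
    qed
  qed
qed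

lemma GH_less_if_glued:
  assumes "Metric_space X dX" "Metric_space Y dY" "f ` X \<subseteq> Y" "0 < r" "r < eps"
    and "\<And>i j. \<lbrakk>i \<in> X; j \<in> X\<rbrakk> \<Longrightarrow> dY (f i) (f j) \<le> dX i j \<and> dX i j \<le> dY (f i) (f j) + 2 * r"
    and "\<And>y. y \<in> Y \<Longrightarrow> \<exists>i\<in>X. dY (f i) y + r < eps"
  shows "GH_less X dX Y dY eps"
  unfolding GH_less_def
proof (intro exI conjI)
  show "Metric_space (Inl ` X \<union> Inr ` Y) (glue_dist dX dY f r)"
    using assms(1-4,6) by (rule Metric_space_glue_dist)
  show "isometric_spaces X dX (Inl ` X) (glue_dist dX dY f r)"
    unfolding isometric_spaces_def glue_dist_def by (auto intro!: exI[of _ Inl] simp: bij_betw_def)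
  show "isometric_spaces Y dY (Inr ` Y) (glue_dist dX dY f r)"
    unfolding isometric_spaces_def glue_dist_def by (auto intro!: exI[of _ Inr] simp: bij_betw_def)
  show "\<forall>u\<in>Inl ` X. \<exists>v\<in>Inr ` Y. glue_dist dX dY f r v u < eps"
  proof
    fix u :: "'a + 'b" assume "u \<in> Inl ` X"
    then obtain i where "i \<in> X" "u = Inl i" by blast
    then have "f i \<in> Y" "glue_dist dX dY f r (Inr (f i)) u = r"
      using assms(2,3) Metric_space.zero[OF assms(2)] by (auto simp: glue_dist_def)
    then show "\<exists>v\<in>Inr ` Y. glue_dist dX dY f r v u < eps"
      using \<open>r < eps\<close> by (intro bexI[of _ "Inr (f i)"]) auto
  qed
  show "\<forall>v\<in>Inr ` Y. \<exists>u\<in>Inl ` X. glue_dist dX dY f r u v < eps"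
  proof
    fix v :: "'a + 'b" assume "v \<in> Inr ` Y"
    then obtain y where "y \<in> Y" "v = Inr y" by blast
    then obtain i where "i \<in> X" "dY (f i) y + r < eps" using assms(7) by blast
    then show "\<exists>u\<in>Inl ` X. glue_dist dX dY f r u v < eps"
      using \<open>v = Inr y\<close> by (auto simp: glue_dist_def)
  qed
qed (auto)

lemma GH_less_pullback_of_net:
  assumes "Metric_space Y dY" "bij_betw h X K" "K \<subseteq> Y"
    and "Y \<subseteq> (\<Union>s\<in>K. Metric_space.mball Y dY s r)" "0 < r" "2 * r \<le> eps"
    and "ultrametric_space K d" "\<forall>a\<in>K. \<forall>b\<in>K. dY a b \<le> d a b \<and> d a b \<le> dY a b + r"
  shows "GH_less X (\<lambda>i j. d (h i) (h j)) Y dY eps"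
proof -
  interpret Metric_space Y dY by (rule assms(1))
  have hX: "h ` X = K" "inj_on h X" using assms(2) unfolding bij_betw_def by auto
  show ?thesis
  proof (rule GH_less_if_glued[OF _ assms(1) _ \<open>0 < r\<close>])
    show "Metric_space X (\<lambda>i j. d (h i) (h j))"
      using ultrametric_space_pullback[OF hX(2)] assms(7) hX(1) ultrametric_imp_Metric_space by blast
    show "h ` X \<subseteq> Y" "r < eps" using hX(1) assms(3,5,6) by auto
    show "dY (h i) (h j) \<le> d (h i) (h j) \<and> d (h i) (h j) \<le> dY (h i) (h j) + 2 * r"
      if "i \<in> X" "j \<in> X" for i j
      using assms(8) hX(1) that \<open>0 < r\<close> by fastforce
    show "\<exists>i\<in>X. dY (h i) y + r < eps" if "y \<in> Y" for y
    proof -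
      obtain s where "s \<in> K" "dY s y < r" using assms(4) \<open>y \<in> Y\<close> by auto
      then show ?thesis using hX(1) assms(6) by force
    qed
  qed
qed

theorem theorem28:
  fixes Y :: "'a set" and dY :: "'a \<Rightarrow> 'a \<Rightarrow> real" and eps :: real
  assumes "ultrametric_space Y dY"
    and "compact_space (Metric_space.mtopology Y dY)"
    and "Y \<noteq> {}"
    and "eps > 0"
  shows "\<exists>(X :: nat set) dX. in_U X dX \<and> GH_less X dX Y dY eps"
proof -
  interpret Metric_space Y dY using assms(1) by (rule ultrametric_imp_Metric_space)
  have "0 < eps / 2" using \<open>eps > 0\<close> by simp
  then obtain K where K: "finite K" "K \<subseteq> Y" "Y \<subseteq> (\<Union>s\<in>K. mball s (eps / 2))"
    using assms(2) unfolding compact_space_eq_mcomplete_mtotally_bounded mtotally_bounded_def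
    by blast
  have "K \<noteq> {}" using K(3) assms(3) by auto
  obtain d where d: "ultrametric_space K d" "card (Sp K d) + 1 = card K"
    "\<forall>a\<in>K. \<forall>b\<in>K. dY a b \<le> d a b \<and> d a b \<le> dY a b + eps / 2"
    using ultrametric_perturbation_in_U[OF K(1) \<open>K \<noteq> {}\<close> ultrametric_space_subset[OF assms(1) K(2)]
      \<open>0 < eps / 2\<close>] by blast
  obtain h where h: "bij_betw h {0..<card K} K" using ex_bij_betw_nat_finite[OF K(1)] by blast
  have "in_U {0..<card K} (\<lambda>i j. d (h i) (h j))"
    using in_U_pullback[of h "{0..<card K}" d] h d(1,2) K(1) \<open>K \<noteq> {}\<close>
    unfolding bij_betw_def in_U_def by simp
  moreover have "GH_less {0..<card K} (\<lambda>i j. d (h i) (h j)) Y dY eps"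
    using GH_less_pullback_of_net[OF Metric_space_axioms h K(2,3) \<open>0 < eps / 2\<close> _ d(1,3)] by simp
  ultimately show ?thesis by blast
qed

end
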